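(* Let $(\mathcal M,X,\bot)$ be a concurrent system, $a$ a letter, and $x$ an $a$-rooted linking execution from some state $\alpha$. Let $\mathcal M^a=\langle\Sigma\setminus\{a\}\rangle$, and fix integers $p,q\ge0$ and a state $\beta$. Then the map $\varphi:\mathcal M_{\beta,\alpha}(p)\times\mathcal M^a_{\alpha\cdot x}(q)\to\mathcal M_\beta$, $\varphi(u,v)=uxv$, is injective.
   Context: A trace monoid $\mathcal M=\mathcal M(\Sigma,I)$ is $\langle\Sigma\mid ab=ba\ ((a,b)\in I)\rangle$, $\Sigma$ finite, $I$ irreflexive symmetric; $|x|$ is length; $D=(\Sigma\times\Sigma)\setminus I$. A concurrent system $(\mathcal M,X,\bot)$: $X$ finite, $\bot\notin X$, right action of $\mathcal M$ on $X\cup\{\bot\}$ with $\bot\cdot x=\bot$. Notation: $\mathcal M_\beta=\{x:\beta\cdot x\ne\bot\}$, $\mathcal M_{\beta,\alpha}(p)=\{u:|u|=p,\ \beta\cdot u=\alpha\}$, $\mathcal M^a_{\gamma}(q)=\{v\in\mathcal M^a:|v|=q,\ \gamma\cdot v\ne\bot\}$. A linking sequence from $\alpha$ is a sequence of letters $a_1,\dots,a_p$ such that for some indices $1\le j_1<\dots<j_q\le p$: $\alpha\cdot(a_1\cdots a_p)\ne\bot$; $(a_{j_k},a_{j_{k+1}})\in D$ for all $k<q$; every letter of $\Sigma$ occurs among $a_{j_1},\dots,a_{j_q}$. It is $a$-rooted if the indices can be chosen with $a_{j_1}=a$. An $a$-rooted linking execution from $\alpha$ is the image in $\mathcal M$ of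 an $a$-rooted linking sequence from $\alpha$. *)

theory Defs
  imports Main
begin

text \<open>Traces of the trace monoid M(Sigma, I) are represented by words (lists) over Sigma,
  modulo the congruence generated by commuting adjacent independent letters.\<close>

inductive trace_step :: "('a \<times> 'a) set \<Rightarrow> 'a list \<Rightarrow> 'a list \<Rightarrow> bool" for I where
  swap: "(a, b) \<in> I \<Longrightarrow> trace_step I (u @ [a, b] @ w) (u @ [b, a] @ w)"

definition trace_eq :: "('a \<times> 'a) set \<Rightarrow> 'a list \<Rightarrow> 'a list \<Rightarrow> bool" where
  "trace_eq I = equivclp (trace_step I)"

definition dep :: "'a set \<Rightarrow> ('a \<times> 'a) set \<Rightarrow> ('a \<times> 'a) set" where
  "dep \<Sigma> I = (\<Sigma> \<times> \<Sigma>) - I"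

text \<open>Action of a word on a state; None plays the role of the sink state bottom.\<close>
fun run :: "('s \<Rightarrow> 'a \<Rightarrow> 's option) \<Rightarrow> 's \<Rightarrow> 'a list \<Rightarrow> 's option" where
  "run act s [] = Some s"
| "run act s (a # w) = (case act s a of None \<Rightarrow> None | Some t \<Rightarrow> run act t w)"

text \<open>A concurrent system (M(Sigma,I), X, bottom): the letter action on X (with bottom as None)
  maps X into X \<union> {bottom}, and independent letters commute, so that it induces a right action
  of the trace monoid.\<close>
definition concurrent_system ::
  "'a set \<Rightarrow> ('a \<times> 'a) set \<Rightarrow> 's set \<Rightarrow> ('s \<Rightarrow> 'a \<Rightarrow> 's option) \<Rightarrow> bool" where
  "concurrent_system \<Sigma> I X act \<longleftrightarrow>
     finite \<Sigma> \<and> I \<subseteq> \<Sigma> \<times> \<Sigma> \<and> irrefl I \<and> sym I \<and> finite X \<and>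
     (\<forall>s\<in>X. \<forall>a\<in>\<Sigma>. act s a = None \<or> (\<exists>t\<in>X. act s a = Some t)) \<and>
     (\<forall>s\<in>X. \<forall>(a, b)\<in>I. run act s [a, b] = run act s [b, a])"

text \<open>The list as (a_1 ... a_p) is a linking sequence from alpha witnessed by the
  strictly increasing (0-based) index list js = [j_1, ..., j_q].\<close>
definition linking_seq_with ::
  "'a set \<Rightarrow> ('a \<times> 'a) set \<Rightarrow> ('s \<Rightarrow> 'a \<Rightarrow> 's option) \<Rightarrow> 's \<Rightarrow> 'a list \<Rightarrow> nat list \<Rightarrow> bool" where
  "linking_seq_with \<Sigma> I act \<alpha> as js \<longleftrightarrow>
     set as \<subseteq> \<Sigma> \<and> run act \<alpha> as \<noteq> None \<and>
     sorted_wrt (<) js \<and> (\<forall>j\<in>set js. j < length as) \<and>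
     (\<forall>k. Suc k < length js \<longrightarrow> (as ! (js ! k), as ! (js ! Suc k)) \<in> dep \<Sigma> I) \<and>
     \<Sigma> \<subseteq> {as ! j | j. j \<in> set js}"

definition rooted_linking_seq ::
  "'a set \<Rightarrow> ('a \<times> 'a) set \<Rightarrow> ('s \<Rightarrow> 'a \<Rightarrow> 's option) \<Rightarrow> 's \<Rightarrow> 'a \<Rightarrow> 'a list \<Rightarrow> bool" where
  "rooted_linking_seq \<Sigma> I act \<alpha> a as \<longleftrightarrow>
     (\<exists>js. linking_seq_with \<Sigma> I act \<alpha> as js \<and> js \<noteq> [] \<and> as ! hd js = a)"

definition rooted_linking_exec ::
  "'a set \<Rightarrow> ('a \<times> 'a) set \<Rightarrow> ('s \<Rightarrow> 'a \<Rightarrow> 's option) \<Rightarrow> 's \<Rightarrow> 'a \<Rightarrow> 'a list \<Rightarrow> bool" where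
  "rooted_linking_exec \<Sigma> I act \<alpha> a x \<longleftrightarrow>
     set x \<subseteq> \<Sigma> \<and> (\<exists>as. trace_eq I x as \<and> rooted_linking_seq \<Sigma> I act \<alpha> a as)"

end

theory Submission
  imports Defs "HOL-Library.Multiset"
begin

text \<open>Trace equivalence is detected by the projections onto pairs of dependent
  letters (projection lemma), and a projection of \<open>u x v\<close> determines its prefix coming
  from \<open>u\<close> once the number of occurrences in \<open>u\<close> of some letter of \<open>x\<close> is known.
  Since \<open>v\<close> and \<open>v'\<close> avoid \<open>a\<close>, the letter \<open>a\<close> occurs equally often in \<open>u\<close>
  and \<open>u'\<close>; walking along the dependence chain of the linking execution, which starts at
  \<open>a\<close>, stays inside \<open>x\<close> and visits every letter, this equality propagates from each letter
  of the chain to the next. So \<open>u\<close> and \<open>u'\<close> have the same letter counts, hence all their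
  dependent projections agree, and the same then holds for \<open>v\<close> and \<open>v'\<close>.\<close>

lemma trace_eq_refl [simp]: "trace_eq I w w"
  by (simp add: trace_eq_def)

lemma trace_eq_sym: "trace_eq I w w' \<Longrightarrow> trace_eq I w' w"
  by (simp add: trace_eq_def equivclp_sym)

lemma trace_eq_trans: "trace_eq I w1 w2 \<Longrightarrow> trace_eq I w2 w3 \<Longrightarrow> trace_eq I w1 w3"
  unfolding trace_eq_def by (rule equivclp_trans)

lemma trace_eq_swap: "(a, b) \<in> I \<Longrightarrow> trace_eq I (a # b # w) (b # a # w)"
  using trace_step.swap[of a b I "[]" w]
  by (simp add: trace_eq_def equivclp_def r_into_rtranclp symclp_def)

lemma trace_eq_Cons: "trace_eq I w w' \<Longrightarrow> trace_eq I (e # w) (e # w')"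
  unfolding trace_eq_def
proof (induction rule: equivclp_induct)
  case (step y z)
  have "trace_step I (e # y) (e # z) \<or> trace_step I (e # z) (e # y)"
    if "trace_step I y z \<or> trace_step I z y"
    using that by (auto elim!: trace_step.cases intro: trace_step.swap[of _ _ _ "e # _", simplified])
  then show ?case
    using step by (meson equivclp_trans r_into_equivclp equivclp_sym)
qed simp

lemma trace_eq_invariant:
  assumes "\<And>w w'. trace_step I w w' \<Longrightarrow> f w = f w'" and "trace_eq I w w'"
  shows "f w = f w'"
  using assms(2) unfolding trace_eq_def
  by (induction rule: equivclp_induct) (auto dest: assms(1))

lemma trace_eq_mset: "trace_eq I w w' \<Longrightarrow> mset w = mset w'"
  by (rule trace_eq_invariant) (auto elim: trace_step.cases)

lemma trace_eq_move_to_front: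
  assumes "sym I" and "\<forall>e\<in>set y. (c, e) \<in> I"
  shows "trace_eq I (y @ c # z) (c # y @ z)"
  using assms(2)
proof (induction y)
  case (Cons e y)
  then have "trace_eq I (e # y @ c # z) (e # c # y @ z)"
    by (simp add: trace_eq_Cons)
  moreover have "(e, c) \<in> I"
    using Cons.prems assms(1) by (auto dest: symD)
  ultimately show ?case
    using trace_eq_swap trace_eq_trans by fastforce
qed simp

abbreviation proj_pair :: "'a \<Rightarrow> 'a \<Rightarrow> 'a list \<Rightarrow> 'a list" where
  "proj_pair c d \<equiv> filter (\<lambda>e. e = c \<or> e = d)"

lemma trace_eq_imp_proj_pair_eq:
  assumes "irrefl I" "sym I" "(c, d) \<notin> I" and "trace_eq I w w'"
  shows "proj_pair c d w = proj_pair c d w'"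
proof (rule trace_eq_invariant[OF _ assms(4)])
  fix w w' assume "trace_step I w w'"
  then show "proj_pair c d w = proj_pair c d w'"
  proof cases
    case (swap a b u v)
    have "(b, a) \<in> I" using assms(2) swap(3) by (rule symD)
    then have "\<not> ((a = c \<or> a = d) \<and> (b = c \<or> b = d))"
      using swap(3) assms(1,3) by (auto simp: irrefl_def)
    then show ?thesis using swap(1,2) by auto
  qed
qed

text \<open>The converse direction of the projection lemma: a word whose dependent projections agree
  with those of \<open>w'\<close> can be reordered, one first letter at a time, into \<open>w'\<close>.\<close>

lemma proj_pair_eq_imp_trace_eq:
  assumes "irrefl I" "sym I"
    and "\<And>c d. (c, d) \<notin> I \<Longrightarrow> proj_pair c d w = proj_pair c d w'"
  shows "trace_eq I w w'"
  using assms(3)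
proof (induction w arbitrary: w')
  case Nil
  have "proj_pair e e w' = []" for e
    using Nil.prems[of e e] assms(1) by (simp add: irrefl_def)
  from this[of "hd w'"] show ?case by (cases w') auto
next
  case (Cons c w)
  have cc: "(c, c) \<notin> I" using assms(1) by (simp add: irrefl_def)
  then have "c \<in> set (proj_pair c c w')"
    using Cons.prems[OF cc, symmetric] by simp
  then have "c \<in> set w'" by simp
  then obtain y z where w': "w' = y @ c # z" and "c \<notin> set y"
    using split_list_first[OF \<open>c \<in> set w'\<close>] by (elim exE conjE)
  have indep: "\<forall>e\<in>set y. (c, e) \<in> I"
  proof (rule ccontr)
    assume "\<not> ?thesis"
    then obtain e where "e \<in> set y" "(c, e) \<notin> I" by blast
    then have "c # proj_pair c e w = proj_pair c e y @ c # proj_pair c e z"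
      using Cons.prems[OF \<open>(c, e) \<notin> I\<close>] w' by simp
    moreover have nonempty: "proj_pair c e y \<noteq> []"
      using \<open>e \<in> set y\<close> by (auto simp: filter_empty_conv)
    ultimately have "hd (proj_pair c e y) = c"
      by (metis hd_append2 list.sel(1))
    then have "c \<in> set y"
      using hd_in_set[OF nonempty] by simp
    then show False using \<open>c \<notin> set y\<close> by contradiction
  qed
  have front: "trace_eq I w' (c # y @ z)"
    using trace_eq_move_to_front[OF assms(2) indep] w' by simp
  have "proj_pair c' d w = proj_pair c' d (y @ z)" if "(c', d) \<notin> I" for c' d
    using Cons.prems[OF that] trace_eq_imp_proj_pair_eq[OF assms(1,2) that front]
    by (simp split: if_splits)
  then have "trace_eq I (c # w) (c # y @ z)"
    by (rule trace_eq_Cons[OF Cons.IH])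
  then show ?case
    using trace_eq_sym[OF front] by (rule trace_eq_trans)
qed

lemma takeWhile_append_not_in:
  "d \<notin> set t \<Longrightarrow> takeWhile (\<lambda>e. e \<noteq> d) (t @ z) = t @ takeWhile (\<lambda>e. e \<noteq> d) z"
  by (induction t) auto

text \<open>Comparing the prefixes up to the first \<open>d\<close> of the two sides.\<close>

lemma append_middle_cancel_by_count:
  assumes "y @ x @ w = y' @ x @ w'" and "d \<in> set x"
    and "count_list y d = count_list y' d"
  shows "y = y'"
proof -
  have shorter_eq: "y1 = y2"
    if eq: "y1 @ x @ w1 = y2 @ x @ w2" "length y1 \<le> length y2"
      and cnt: "count_list y1 d = count_list y2 d" for y1 y2 w1 w2
  proof -
    obtain t where t: "y2 = y1 @ t" "x @ w1 = t @ x @ w2"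
    proof -
      obtain us where
        us: "y1 = y2 @ us \<and> us @ x @ w1 = x @ w2 \<or> y1 @ us = y2 \<and> x @ w1 = us @ x @ w2"
        using eq(1) append_eq_append_conv2[of y1 "x @ w1" y2 "x @ w2"] by blast
      then show ?thesis
      proof
        assume "y1 = y2 @ us \<and> us @ x @ w1 = x @ w2"
        moreover from this have "us = []" using eq(2) by simp
        ultimately show ?thesis using that[of "[]"] by simp
      qed (use that in blast)
    qed
    have "d \<notin> set t"
      using cnt t(1) by (simp add: count_list_0_iff)
    have "takeWhile (\<lambda>e. e \<noteq> d) x = takeWhile (\<lambda>e. e \<noteq> d) (x @ w1)"
      using \<open>d \<in> set x\<close> by simp
    also have "\<dots> = t @ takeWhile (\<lambda>e. e \<noteq> d) (x @ w2)"
      using t(2) \<open>d \<notin> set t\<close> by (simp add: takeWhile_append_not_in)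
    also have "\<dots> = t @ takeWhile (\<lambda>e. e \<noteq> d) x"
      using \<open>d \<in> set x\<close> by simp
    finally have "t = []" by simp
    then show ?thesis using t(1) by simp
  qed
  show ?thesis
  proof (cases "length y \<le> length y'")
    case True
    then show ?thesis using shorter_eq[OF assms(1) _ assms(3)] by blast
  next
    case False
    then show ?thesis using shorter_eq[OF assms(1)[symmetric] _ assms(3)[symmetric]] by simp
  qed
qed

lemma count_list_filter: "P y \<Longrightarrow> count_list (filter P xs) y = count_list xs y"
  by (induction xs) auto

lemma count_list_eq_along_dependence:
  assumes "irrefl I" "sym I" and "trace_eq I (u @ x @ v) (u' @ x @ v')"
    and "(d, c) \<notin> I" "d \<in> set x" and "count_list u d = count_list u' d"
  shows "count_list u c = count_list u' c"
proof -
  have "proj_pair d c u @ proj_pair d c x @ proj_pair d c v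
      = proj_pair d c u' @ proj_pair d c x @ proj_pair d c v'"
    using trace_eq_imp_proj_pair_eq[OF assms(1,2,4,3)] by simp
  moreover have "d \<in> set (proj_pair d c x)" using assms(5) by simp
  moreover have "count_list (proj_pair d c u) d = count_list (proj_pair d c u') d"
    using assms(6) by (simp add: count_list_filter)
  ultimately have "proj_pair d c u = proj_pair d c u'"
    by (rule append_middle_cancel_by_count)
  then show ?thesis by (metis (mono_tags, lifting) count_list_filter)
qed

lemma count_list_eq_along_dependence_chain:
  assumes "irrefl I" "sym I" and "trace_eq I (u @ x @ v) (u' @ x @ v')"
    and "successively (\<lambda>d c. (d, c) \<notin> I) bs" "set bs \<subseteq> set x"
    and "count_list u (hd bs) = count_list u' (hd bs)"
  shows "\<forall>b\<in>set bs. count_list u b = count_list u' b"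
  using assms(4-6)
proof (induction bs rule: induct_list012)
  case (3 d c bs)
  have "count_list u c = count_list u' c"
    by (rule count_list_eq_along_dependence[OF assms(1-3)]) (use 3(3-5) in auto)
  then show ?case using 3 by simp
qed simp_all

lemma trace_eq_cancel_middle_if_mset_eq:
  assumes "irrefl I" "sym I" and "trace_eq I (u @ x @ v) (u' @ x @ v')"
    and "mset u = mset u'"
  shows "trace_eq I u u' \<and> trace_eq I v v'"
proof -
  have "proj_pair c d u = proj_pair c d u' \<and> proj_pair c d v = proj_pair c d v'"
    if "(c, d) \<notin> I" for c d
  proof -
    have "length (proj_pair c d u) = length (proj_pair c d u')"
      using assms(4) by (metis mset_filter size_mset)
    then show ?thesis
      using trace_eq_imp_proj_pair_eq[OF assms(1,2) that assms(3)] by simp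
  qed
  then show ?thesis
    using proj_pair_eq_imp_trace_eq[OF assms(1,2)] by blast
qed

lemma rooted_linking_exec_dependence_chain:
  assumes "rooted_linking_exec \<Sigma> I act \<alpha> a x"
  obtains bs where "bs \<noteq> []" "hd bs = a" "successively (\<lambda>d c. (d, c) \<notin> I) bs"
    "\<Sigma> \<subseteq> set bs" "set bs \<subseteq> set x"
proof -
  obtain as js where "trace_eq I x as" and L: "linking_seq_with \<Sigma> I act \<alpha> as js"
    and "js \<noteq> []" "as ! hd js = a"
    using assms unfolding rooted_linking_exec_def rooted_linking_seq_def by blast
  define bs where "bs = map ((!) as) js"
  have "successively (\<lambda>d c. (d, c) \<notin> I) bs"
    using L unfolding linking_seq_with_def dep_def bs_def
    by (auto simp: successively_conv_nth)
  moreover have "\<Sigma> \<subseteq> set bs"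
    using L unfolding linking_seq_with_def bs_def by auto
  moreover have "set bs \<subseteq> set x"
    using L mset_eq_setD[OF trace_eq_mset[OF \<open>trace_eq I x as\<close>]]
    unfolding linking_seq_with_def bs_def by auto
  moreover have "bs \<noteq> []" "hd bs = a"
    using \<open>js \<noteq> []\<close> \<open>as ! hd js = a\<close> by (auto simp: bs_def hd_map)
  ultimately show ?thesis using that by blast
qed

theorem lemma1:
  fixes \<Sigma> :: "'a set" and I :: "('a \<times> 'a) set" and X :: "'s set"
    and act :: "'s \<Rightarrow> 'a \<Rightarrow> 's option" and a :: 'a and \<alpha> \<beta> \<gamma> :: 's
    and x :: "'a list" and p q :: nat
  assumes "concurrent_system \<Sigma> I X act"
    and "a \<in> \<Sigma>" and "\<alpha> \<in> X" and "\<beta> \<in> X"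
    and "rooted_linking_exec \<Sigma> I act \<alpha> a x"
    and "run act \<alpha> x = Some \<gamma>"
  shows "\<forall>u u' v v'.
     (set u \<subseteq> \<Sigma> \<and> length u = p \<and> run act \<beta> u = Some \<alpha>) \<longrightarrow>
     (set u' \<subseteq> \<Sigma> \<and> length u' = p \<and> run act \<beta> u' = Some \<alpha>) \<longrightarrow>
     (set v \<subseteq> \<Sigma> - {a} \<and> length v = q \<and> run act \<gamma> v \<noteq> None) \<longrightarrow>
     (set v' \<subseteq> \<Sigma> - {a} \<and> length v' = q \<and> run act \<gamma> v' \<noteq> None) \<longrightarrow>
     trace_eq I (u @ x @ v) (u' @ x @ v') \<longrightarrow>
     trace_eq I u u' \<and> trace_eq I v v'"
proof (intro allI impI)
  fix u u' v v'
  assume u: "set u \<subseteq> \<Sigma> \<and> length u = p \<and> run act \<beta> u = Some \<alpha>"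
    and u': "set u' \<subseteq> \<Sigma> \<and> length u' = p \<and> run act \<beta> u' = Some \<alpha>"
    and v: "set v \<subseteq> \<Sigma> - {a} \<and> length v = q \<and> run act \<gamma> v \<noteq> None"
    and v': "set v' \<subseteq> \<Sigma> - {a} \<and> length v' = q \<and> run act \<gamma> v' \<noteq> None"
    and eq: "trace_eq I (u @ x @ v) (u' @ x @ v')"
  have I: "irrefl I" "sym I"
    using assms(1) by (auto simp: concurrent_system_def)
  obtain bs where bs: "bs \<noteq> []" "hd bs = a" "successively (\<lambda>d c. (d, c) \<notin> I) bs"
    "\<Sigma> \<subseteq> set bs" "set bs \<subseteq> set x"
    using rooted_linking_exec_dependence_chain[OF assms(5)] by blast
  have "a \<notin> set v" "a \<notin> set v'"
    using v v' by auto
  then have "count_list u a = count_list u' a"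
    using arg_cong[OF trace_eq_mset[OF eq], of "\<lambda>M. count M a"] by (simp add: count_mset)
  then have "\<forall>b\<in>set bs. count_list u b = count_list u' b"
    using count_list_eq_along_dependence_chain[OF I eq bs(3,5)] bs(2) by simp
  then have "mset u = mset u'"
    using u u' bs(4) by (metis count_mset count_notin multiset_eqI subsetD)
  then show "trace_eq I u u' \<and> trace_eq I v v'"
    using trace_eq_cancel_middle_if_mset_eq[OF I eq] by blast
qed

end
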